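(* Assume the standing assumptions and fix a function $h$ satisfying (h1)–(h4). Let $\sigma$ be a stopping time (with respect to an admissible filtration) with $\mathbf E\sigma<\infty$. Then $$\lim_{x\to\infty}\delta_\sigma(x)=0\quad\text{if and only if}\quad \lim_{x\to\infty}\frac{\mathbf P(M_\sigma>x)}{\overline F(x)}=\mathbf E\sigma.$$
   Context: Standing assumptions: $\{\xi_n\}_{n\ge1}$ are i.i.d. real random variables with common distribution function $F$ and finite mean $\mathbf E\xi_1=-m<0$. $F$ is long-tailed: $\overline F(x)=1-F(x)>0$ for all $x$, and $\overline F(x-c)/\overline F(x)\to1$ as $x\to\infty$ for every fixed $c>0$. Notation: $S_0=0$ and $S_n=\sum_{i=1}^n\xi_i$; $M_\sigma=\max_{0\le i\le\sigma}S_i$. Admissible filtration: stopping times are taken with respect to a filtration $\{\mathcal F_n\}_{n\ge0}$ such that $\xi_n$ is $\mathcal F_n$-measurable and $\xi_{n+1}$ is independent of $\mathcal F_n$. The function $h:\mathbb R_+\to\mathbb R_+$ satisfies: - (h1) $h(x)\le x/2$; - (h2) $h(x)\to\infty$; - (h3) $\overline F(x-h(x))/\overline F(x)\to1$ as $x\to\infty$; - (h4) there exists $x_0$ with $h(x+t)\le h(x)+t$ for all $x\ge x_0$, $t\ge0$. For $x\ge0$, let $\mu(x)=\min\{n:S_n>x\}$, with $\min\emptyset=\infty$. For a stopping time $\sigma$, define $$A_{\sigma,2}(x)=\{\mu(x)\le\sigma,\ S_{\mu(x)-1}>h(x)\},\qquad \delta_\sigma(x)=\sup_{y\ge x}\frac{\mathbf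 P(A_{\sigma,2}(y))}{\overline F(y)}.$$ *)

theory Defs
  imports "HOL-Probability.Probability"
begin

definition S :: "(nat \<Rightarrow> 'a \<Rightarrow> real) \<Rightarrow> nat \<Rightarrow> 'a \<Rightarrow> real" where
  "S \<xi> n \<omega> = (\<Sum>i\<in>{1..n}. \<xi> i \<omega>)"

definition Fbar :: "'a measure \<Rightarrow> (nat \<Rightarrow> 'a \<Rightarrow> real) \<Rightarrow> real \<Rightarrow> real" where
  "Fbar M \<xi> x = 1 - cdf (distr M borel (\<xi> 1)) x"

definition Msig :: "(nat \<Rightarrow> 'a \<Rightarrow> real) \<Rightarrow> ('a \<Rightarrow> enat) \<Rightarrow> 'a \<Rightarrow> ereal" where
  "Msig \<xi> \<sigma> \<omega> = (SUP i\<in>{i. enat i \<le> \<sigma> \<omega>}. ereal (S \<xi> i \<omega>))"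

definition mu :: "(nat \<Rightarrow> 'a \<Rightarrow> real) \<Rightarrow> real \<Rightarrow> 'a \<Rightarrow> enat" where
  "mu \<xi> x \<omega> = (if \<exists>n. S \<xi> n \<omega> > x then enat (LEAST n. S \<xi> n \<omega> > x) else \<infinity>)"

definition A2 :: "'a measure \<Rightarrow> (nat \<Rightarrow> 'a \<Rightarrow> real) \<Rightarrow> (real \<Rightarrow> real) \<Rightarrow> ('a \<Rightarrow> enat) \<Rightarrow> real \<Rightarrow> 'a set" where
  "A2 M \<xi> h \<sigma> x = {\<omega>\<in>space M. \<exists>n. mu \<xi> x \<omega> = enat n \<and> enat n \<le> \<sigma> \<omega> \<and> S \<xi> (n - 1) \<omega> > h x}"

definition delta :: "'a measure \<Rightarrow> (nat \<Rightarrow> 'a \<Rightarrow> real) \<Rightarrow> (real \<Rightarrow> real) \<Rightarrow> ('a \<Rightarrow> enat) \<Rightarrow> real \<Rightarrow> ereal" where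
  "delta M \<xi> h \<sigma> x = (SUP y\<in>{x..}. ereal (measure M (A2 M \<xi> h \<sigma> y) / Fbar M \<xi> y))"

end

theory Submission imports Defs begin

text \<open>
  The event \<open>M_\<sigma> > x\<close> splits disjointly into \<open>A_{\<sigma>,2}(x)\<close> and the event that the walk
  first exceeds \<open>x\<close> before \<open>\<sigma>\<close> by a jump from a level at most \<open>h(x)\<close>; it suffices to show
  that the latter has probability \<open>\<sim> E\<sigma> Fbar(x)\<close>. It is contained in the union of the events
  \<open>{\<sigma> > n, \<xi>_{n+1} > x - h(x)}\<close>; as \<open>\<xi>_{n+1}\<close> is independent of \<open>{\<sigma> > n} \<in> F_n\<close>, their
  probabilities add up to \<open>E\<sigma> Fbar(x - h(x)) \<sim> E\<sigma> Fbar(x)\<close> by (h3). Conversely, for fixed \<open>N\<close>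
  and \<open>A\<close> it contains the disjoint events \<open>{\<sigma> > n, max_{k\<le>n} S_k \<le> h(x), S_n > -A,
  \<xi>_{n+1} > x + A}\<close>, \<open>n < N\<close>, of total probability
  \<open>Fbar(x + A) (\<Sum>_{n<N} P(\<sigma> > n) - \<Sum>_{n<N} P(S_n \<le> -A) - o(1))\<close>, and
  \<open>Fbar(x + A) \<sim> Fbar(x)\<close> because \<open>F\<close> is long-tailed; letting \<open>N, A \<rightarrow> \<infinity>\<close> gives the lower bound.
\<close>

lemma S_0 [simp]: "S \<xi> 0 \<omega> = 0"
  by (simp add: S_def)

lemma S_Suc: "S \<xi> (Suc n) \<omega> = S \<xi> n \<omega> + \<xi> (Suc n) \<omega>"
  by (simp add: S_def)

lemma mu_eq_enat_iff: "mu \<xi> x \<omega> = enat n \<longleftrightarrow> S \<xi> n \<omega> > x \<and> (\<forall>k<n. S \<xi> k \<omega> \<le> x)"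
proof
  assume mu: "mu \<xi> x \<omega> = enat n"
  then have ex: "\<exists>n. S \<xi> n \<omega> > x"
    by (auto simp: mu_def split: if_splits)
  with mu have "n = (LEAST n. S \<xi> n \<omega> > x)"
    by (simp add: mu_def)
  then show "S \<xi> n \<omega> > x \<and> (\<forall>k<n. S \<xi> k \<omega> \<le> x)"
    using LeastI_ex[OF ex] not_less_Least by (metis not_le)
next
  assume n: "S \<xi> n \<omega> > x \<and> (\<forall>k<n. S \<xi> k \<omega> \<le> x)"
  then have "(LEAST n. S \<xi> n \<omega> > x) = n"
    by (intro Least_equality) (auto simp: not_less[symmetric])
  with n show "mu \<xi> x \<omega> = enat n"
    by (auto simp: mu_def)
qed

lemma Msig_greater_iff: "Msig \<xi> \<sigma> \<omega> > ereal x \<longleftrightarrow> (\<exists>n. mu \<xi> x \<omega> = enat n \<and> enat n \<le> \<sigma> \<omega>)"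
proof
  assume "Msig \<xi> \<sigma> \<omega> > ereal x"
  then obtain i where i: "enat i \<le> \<sigma> \<omega>" "x < S \<xi> i \<omega>"
    unfolding Msig_def by (auto simp: less_SUP_iff)
  define n where "n = (LEAST n. S \<xi> n \<omega> > x)"
  have "n \<le> i"
    unfolding n_def using i by (intro Least_le) auto
  with i have "enat n \<le> \<sigma> \<omega>"
    by (meson enat_ord_simps(1) order_trans)
  moreover have "mu \<xi> x \<omega> = enat n"
    using i by (auto simp: mu_def n_def)
  ultimately show "\<exists>n. mu \<xi> x \<omega> = enat n \<and> enat n \<le> \<sigma> \<omega>"
    by blast
next
  assume "\<exists>n. mu \<xi> x \<omega> = enat n \<and> enat n \<le> \<sigma> \<omega>"
  then show "Msig \<xi> \<sigma> \<omega> > ereal x"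
    unfolding Msig_def mu_eq_enat_iff by (auto simp: less_SUP_iff)
qed

lemma tendsto_SUP_tail_iff:
  fixes f :: "real \<Rightarrow> real"
  assumes nonneg: "\<And>x. f x \<ge> 0"
  shows "((\<lambda>x. SUP y\<in>{x..}. ereal (f y)) \<longlongrightarrow> 0) at_top \<longleftrightarrow> (f \<longlongrightarrow> 0) at_top"
proof
  have le_SUP: "ereal (f x) \<le> (SUP y\<in>{x..}. ereal (f y))" for x
    by (rule SUP_upper) auto
  assume "((\<lambda>x. SUP y\<in>{x..}. ereal (f y)) \<longlongrightarrow> 0) at_top"
  then have "((\<lambda>x. ereal (f x)) \<longlongrightarrow> 0) at_top"
    by (rule tendsto_sandwich[rotated 2, OF tendsto_const]) (use nonneg le_SUP in auto)
  then show "(f \<longlongrightarrow> 0) at_top"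
    by (simp add: zero_ereal_def)
next
  assume f: "(f \<longlongrightarrow> 0) at_top"
  show "((\<lambda>x. SUP y\<in>{x..}. ereal (f y)) \<longlongrightarrow> 0) at_top"
  proof (rule order_tendstoI)
    fix e :: ereal
    assume "e < 0"
    moreover have "0 \<le> (SUP y\<in>{x..}. ereal (f y))" for x
      using nonneg by (intro SUP_upper2[of x]) auto
    ultimately show "eventually (\<lambda>x. e < (SUP y\<in>{x..}. ereal (f y))) at_top"
      by (intro always_eventually allI) (meson less_le_trans)
  next
    fix e :: ereal
    assume "0 < e"
    then obtain r where r: "0 < ereal r" "ereal r < e"
      using ereal_dense2 by blast
    then have "eventually (\<lambda>y. f y < r) at_top"
      using f by (intro order_tendstoD(2)) auto
    then obtain X where X: "\<And>y. y \<ge> X \<Longrightarrow> f y < r"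
      by (auto simp: eventually_at_top_linorder)
    have "(SUP y\<in>{x..}. ereal (f y)) < e" if "x \<ge> X" for x
    proof -
      have "(SUP y\<in>{x..}. ereal (f y)) \<le> ereal r"
        using X that by (intro SUP_least) (auto intro: less_imp_le)
      then show ?thesis
        using r(2) by (rule le_less_trans)
    qed
    then show "eventually (\<lambda>x. (SUP y\<in>{x..}. ereal (f y)) < e) at_top"
      by (auto simp: eventually_at_top_linorder)
  qed
qed

lemma long_tailed_shift_right:
  fixes G :: "real \<Rightarrow> real"
  assumes long_tailed: "\<And>c. c > 0 \<Longrightarrow> ((\<lambda>x. G (x - c) / G x) \<longlongrightarrow> 1) at_top"
    and "A > 0"
  shows "((\<lambda>x. G (x + A) / G x) \<longlongrightarrow> 1) at_top"
proof -
  have "filterlim (\<lambda>x::real. x + A) at_top at_top"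
    by (subst add.commute) (rule filterlim_tendsto_add_at_top[OF tendsto_const filterlim_ident])
  then have "((\<lambda>x. G (x + A - A) / G (x + A)) \<longlongrightarrow> 1) at_top"
    by (rule filterlim_compose[OF long_tailed[OF \<open>A > 0\<close>]])
  then have "((\<lambda>x. inverse (G x / G (x + A))) \<longlongrightarrow> inverse 1) at_top"
    by (intro tendsto_inverse) simp_all
  then show ?thesis
    by simp
qed

locale stopped_walk = prob_space M for M :: "'a measure" +
  fixes \<xi> :: "nat \<Rightarrow> 'a \<Rightarrow> real" and F :: "nat \<Rightarrow> 'a measure" and \<sigma> :: "'a \<Rightarrow> enat"
  assumes ident: "\<And>n. n \<ge> 1 \<Longrightarrow> distr M borel (\<xi> n) = distr M borel (\<xi> 1)"
    and filt_sub: "\<And>n. subalgebra M (F n)"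
    and filt_mono: "\<And>n k. n \<le> k \<Longrightarrow> sets (F n) \<subseteq> sets (F k)"
    and adapted: "\<And>n. n \<ge> 1 \<Longrightarrow> \<xi> n \<in> borel_measurable (F n)"
    and indep_next: "\<And>n. indep_set (sets (F n)) (sets (vimage_algebra (space M) (\<xi> (Suc n)) borel))"
    and stopping: "\<And>n. Measurable.pred (F n) (\<lambda>\<omega>. \<sigma> \<omega> \<le> enat n)"
    and Esigma_finite: "(\<integral>\<^sup>+\<omega>. ennreal_of_enat (\<sigma> \<omega>) \<partial>M) < \<infinity>"
begin

lemma space_F [simp]: "space (F n) = space M"
  using filt_sub[of n] by (auto simp: subalgebra_def)

lemma sets_F_subset: "sets (F n) \<subseteq> sets M"
  using filt_sub[of n] by (auto simp: subalgebra_def)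

lemma S_measurable_F: "k \<le> n \<Longrightarrow> S \<xi> k \<in> borel_measurable (F n)"
proof -
  assume "k \<le> n"
  have "\<xi> i \<in> borel_measurable (F n)" if "1 \<le> i" "i \<le> k" for i
  proof -
    have "subalgebra (F n) (F i)"
      using filt_mono[of i n] that \<open>k \<le> n\<close> by (simp add: subalgebra_def)
    then show ?thesis
      using measurable_from_subalg adapted[OF \<open>1 \<le> i\<close>] by blast
  qed
  then have "(\<lambda>\<omega>. \<Sum>i\<in>{1..k}. \<xi> i \<omega>) \<in> borel_measurable (F n)"
    by (intro borel_measurable_sum) auto
  then show ?thesis
    unfolding S_def[abs_def] by simp
qed

lemma S_measurable [measurable]: "S \<xi> k \<in> borel_measurable M"
  using measurable_from_subalg[OF filt_sub S_measurable_F[OF order_refl]] by blast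

lemma xi_measurable [measurable]: "\<xi> (Suc n) \<in> borel_measurable M"
  using measurable_from_subalg[OF filt_sub adapted] by auto

lemma sigma_le_sets_F: "{\<omega>\<in>space M. \<sigma> \<omega> \<le> enat n} \<in> sets (F n)"
  using stopping[of n] by (simp add: pred_def)

lemma sigma_measurable [measurable]: "\<sigma> \<in> measurable M (count_space UNIV)"
proof -
  have le_sets: "{\<omega>\<in>space M. \<sigma> \<omega> \<le> enat n} \<in> sets M" for n
    using sigma_le_sets_F sets_F_subset by blast
  have "\<sigma> -` {a} \<inter> space M \<in> sets M" for a
  proof (cases a)
    case (enat n)
    have "\<sigma> -` {a} \<inter> space M =
      {\<omega>\<in>space M. \<sigma> \<omega> \<le> enat n} - (\<Union>k<n. {\<omega>\<in>space M. \<sigma> \<omega> \<le> enat k})"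
    proof (intro set_eqI iffI)
      fix \<omega> assume "\<omega> \<in> {\<omega>\<in>space M. \<sigma> \<omega> \<le> enat n} - (\<Union>k<n. {\<omega>\<in>space M. \<sigma> \<omega> \<le> enat k})"
      then show "\<omega> \<in> \<sigma> -` {a} \<inter> space M"
        using enat by (cases "\<sigma> \<omega>") auto
    qed (use enat in auto)
    then show ?thesis
      using le_sets by auto
  next
    case infinity
    have "\<sigma> -` {a} \<inter> space M = space M - (\<Union>n. {\<omega>\<in>space M. \<sigma> \<omega> \<le> enat n})"
      using infinity by (auto, metis order_refl not_infinity_eq)
    then show ?thesis
      using le_sets by auto
  qed
  then show ?thesis
    by (auto simp: measurable_count_space_eq2_countable)
qed

lemma Fbar_eq_prob: "Fbar M \<xi> c = prob {\<omega>\<in>space M. \<xi> (Suc n) \<omega> > c}"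
proof -
  have "Fbar M \<xi> c = 1 - measure (distr M borel (\<xi> (Suc n))) {..c}"
    using ident[of "Suc n"] by (simp add: Fbar_def cdf_def)
  also have "measure (distr M borel (\<xi> (Suc n))) {..c} = prob (\<xi> (Suc n) -` {..c} \<inter> space M)"
    by (rule measure_distr) auto
  also have "\<xi> (Suc n) -` {..c} \<inter> space M = space M - {\<omega>\<in>space M. \<xi> (Suc n) \<omega> > c}"
    by auto
  also have "prob (space M - {\<omega>\<in>space M. \<xi> (Suc n) \<omega> > c}) = 1 - prob {\<omega>\<in>space M. \<xi> (Suc n) \<omega> > c}"
    by (rule prob_compl) measurable
  finally show ?thesis
    by simp
qed

lemma prob_Int_jump:
  assumes "E \<in> sets (F n)"
  shows "prob (E \<inter> {\<omega>\<in>space M. \<xi> (Suc n) \<omega> > c}) = prob E * Fbar M \<xi> c"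
proof -
  have "{\<omega>\<in>space M. \<xi> (Suc n) \<omega> > c} = \<xi> (Suc n) -` {c<..} \<inter> space M"
    by auto
  then have "{\<omega>\<in>space M. \<xi> (Suc n) \<omega> > c} \<in> sets (vimage_algebra (space M) (\<xi> (Suc n)) borel)"
    by (auto intro: in_vimage_algebra)
  then show ?thesis
    unfolding Fbar_eq_prob[of c n] by (rule indep_setD[OF indep_next assms])
qed

definition sigma_gt :: "nat \<Rightarrow> 'a set" where
  "sigma_gt n = {\<omega>\<in>space M. enat n < \<sigma> \<omega>}"

definition Esigma :: real where
  "Esigma = enn2real (\<integral>\<^sup>+\<omega>. ennreal_of_enat (\<sigma> \<omega>) \<partial>M)"

lemma sigma_gt_sets_F: "sigma_gt n \<in> sets (F n)"
proof -
  have "sigma_gt n = space (F n) - {\<omega>\<in>space M. \<sigma> \<omega> \<le> enat n}"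
    by (auto simp: sigma_gt_def)
  then show ?thesis
    by (metis sets.compl_sets sigma_le_sets_F)
qed

lemma sigma_gt_sets: "sigma_gt n \<in> sets M"
  using sigma_gt_sets_F sets_F_subset by blast

lemma sums_prob_sigma_gt: "(\<lambda>n. prob (sigma_gt n)) sums Esigma"
proof -
  have "(\<integral>\<^sup>+\<omega>. ennreal_of_enat (\<sigma> \<omega>) \<partial>M) = (\<Sum>n. emeasure M (sigma_gt n))"
    unfolding sigma_gt_def by (rule nn_integral_enat_function) measurable
  also have "\<dots> = (\<Sum>n. ennreal (prob (sigma_gt n)))"
    by (simp add: emeasure_eq_measure)
  finally have Esigma_eq: "(\<integral>\<^sup>+\<omega>. ennreal_of_enat (\<sigma> \<omega>) \<partial>M) = (\<Sum>n. ennreal (prob (sigma_gt n)))" .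
  have summable: "summable (\<lambda>n. prob (sigma_gt n))"
    by (rule summable_suminf_not_top) (use Esigma_eq Esigma_finite in auto)
  have "Esigma = (\<Sum>n. prob (sigma_gt n))"
    unfolding Esigma_def Esigma_eq suminf_ennreal2[OF measure_nonneg summable]
    by (rule enn2real_ennreal[OF suminf_nonneg[OF summable measure_nonneg]])
  with summable show ?thesis
    by (simp add: summable_sums)
qed

definition jump_set :: "real \<Rightarrow> real \<Rightarrow> 'a set" where
  "jump_set x b = {\<omega>\<in>space M. \<exists>n. mu \<xi> x \<omega> = enat n \<and> enat n \<le> \<sigma> \<omega> \<and> S \<xi> (n - 1) \<omega> \<le> b}"

lemma jump_set_sets: "jump_set x b \<in> sets M"
proof -
  have "jump_set x b = (\<Union>n. {\<omega>\<in>space M. S \<xi> n \<omega> > x \<and> (\<forall>k<n. S \<xi> k \<omega> \<le> x) \<and>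
      enat n \<le> \<sigma> \<omega> \<and> S \<xi> (n - 1) \<omega> \<le> b})"
    by (auto simp: jump_set_def mu_eq_enat_iff)
  also have "\<dots> \<in> sets M"
    by measurable
  finally show ?thesis .
qed

lemma A2_sets: "A2 M \<xi> h \<sigma> x \<in> sets M"
proof -
  have "A2 M \<xi> h \<sigma> x = (\<Union>n. {\<omega>\<in>space M. S \<xi> n \<omega> > x \<and> (\<forall>k<n. S \<xi> k \<omega> \<le> x) \<and>
      enat n \<le> \<sigma> \<omega> \<and> S \<xi> (n - 1) \<omega> > h x})"
    by (auto simp: A2_def mu_eq_enat_iff)
  also have "\<dots> \<in> sets M"
    by measurable
  finally show ?thesis .
qed

lemma measure_Msig_greater:
  "measure M {\<omega>\<in>space M. Msig \<xi> \<sigma> \<omega> > ereal x} = measure M (jump_set x (h x)) + measure M (A2 M \<xi> h \<sigma> x)"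
proof -
  have "{\<omega>\<in>space M. Msig \<xi> \<sigma> \<omega> > ereal x} = jump_set x (h x) \<union> A2 M \<xi> h \<sigma> x"
    unfolding Msig_greater_iff jump_set_def A2_def by (auto simp: not_le)
  moreover have "jump_set x (h x) \<inter> A2 M \<xi> h \<sigma> x = {}"
    unfolding jump_set_def A2_def by auto
  ultimately show ?thesis
    using finite_measure_Union[OF jump_set_sets A2_sets] by simp
qed

lemma measure_jump_set_le:
  assumes "x \<ge> 0"
  shows "measure M (jump_set x b) \<le> Esigma * Fbar M \<xi> (x - b)"
proof -
  define B where "B n = sigma_gt n \<inter> {\<omega>\<in>space M. \<xi> (Suc n) \<omega> > x - b}" for n
  have prob_B: "prob (B n) = prob (sigma_gt n) * Fbar M \<xi> (x - b)" for n
    unfolding B_def using prob_Int_jump sigma_gt_sets_F by simp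
  have B_sets: "range B \<subseteq> sets M"
    unfolding B_def using sigma_gt_sets by auto
  have "jump_set x b \<subseteq> (\<Union>n. B n)"
  proof
    fix \<omega>
    assume "\<omega> \<in> jump_set x b"
    then obtain N where N: "\<omega> \<in> space M" "S \<xi> N \<omega> > x" "\<forall>k<N. S \<xi> k \<omega> \<le> x"
        "enat N \<le> \<sigma> \<omega>" "S \<xi> (N - 1) \<omega> \<le> b"
      by (auto simp: jump_set_def mu_eq_enat_iff)
    then obtain n where n: "N = Suc n"
      using \<open>x \<ge> 0\<close> by (cases N) auto
    with N have "\<omega> \<in> B n"
      by (auto simp: B_def sigma_gt_def S_Suc Suc_ile_eq)
    then show "\<omega> \<in> (\<Union>n. B n)"
      by blast
  qed
  then have "measure M (jump_set x b) \<le> measure M (\<Union>n. B n)"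
    using B_sets by (intro finite_measure_mono) auto
  also have "\<dots> \<le> (\<Sum>n. prob (B n))"
    by (rule finite_measure_subadditive_countably[OF B_sets])
      (simp add: prob_B summable_mult2 sums_summable[OF sums_prob_sigma_gt])
  also have "\<dots> = Esigma * Fbar M \<xi> (x - b)"
    unfolding prob_B using sums_unique[OF sums_prob_sigma_gt] suminf_mult2[OF sums_summable[OF sums_prob_sigma_gt]]
    by simp
  finally show ?thesis .
qed

definition pre_jump_set :: "real \<Rightarrow> real \<Rightarrow> nat \<Rightarrow> 'a set" where
  "pre_jump_set b A n = sigma_gt n \<inter> (\<Inter>k\<le>n. {\<omega>\<in>space M. S \<xi> k \<omega> \<le> b}) \<inter> {\<omega>\<in>space M. S \<xi> n \<omega> > -A}"

lemma pre_jump_set_sets_F: "pre_jump_set b A n \<in> sets (F n)"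
proof -
  have "{\<omega>\<in>space M. S \<xi> k \<omega> \<le> b} \<in> sets (F n)" if "k \<le> n" for k
    using S_measurable_F[OF that] unfolding borel_measurable_iff_le by simp
  then have "(\<Inter>k\<le>n. {\<omega>\<in>space M. S \<xi> k \<omega> \<le> b}) \<in> sets (F n)"
    by (intro sets.finite_INT) auto
  moreover have "{\<omega>\<in>space M. S \<xi> n \<omega> > -A} \<in> sets (F n)"
    using S_measurable_F[of n n] unfolding borel_measurable_iff_greater by simp
  ultimately show ?thesis
    unfolding pre_jump_set_def using sigma_gt_sets_F by auto
qed

lemma prob_pre_jump_set_ge:
  "prob (sigma_gt n) - prob {\<omega>\<in>space M. S \<xi> n \<omega> \<le> -A} - (\<Sum>k\<le>n. prob {\<omega>\<in>space M. S \<xi> k \<omega> > b})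
    \<le> prob (pre_jump_set b A n)"
proof -
  let ?G = "pre_jump_set b A n"
  let ?low = "{\<omega>\<in>space M. S \<xi> n \<omega> \<le> -A}"
  let ?high = "\<Union>k\<le>n. {\<omega>\<in>space M. S \<xi> k \<omega> > b}"
  have G_sets: "?G \<in> sets M"
    using pre_jump_set_sets_F sets_F_subset by blast
  have "sigma_gt n \<subseteq> ?G \<union> ?low \<union> ?high"
    unfolding pre_jump_set_def sigma_gt_def by (auto simp: not_less not_le)
  then have "prob (sigma_gt n) \<le> prob (?G \<union> ?low \<union> ?high)"
    using G_sets by (intro finite_measure_mono) auto
  also have "\<dots> \<le> prob (?G \<union> ?low) + prob ?high"
    using G_sets by (intro measure_subadditive) auto
  also have "prob (?G \<union> ?low) \<le> prob ?G + prob ?low"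
    using G_sets by (intro measure_subadditive) auto
  also have "prob ?high \<le> (\<Sum>k\<le>n. prob {\<omega>\<in>space M. S \<xi> k \<omega> > b})"
    by (rule finite_measure_subadditive_finite) auto
  finally show ?thesis
    by simp
qed

lemma measure_jump_set_ge:
  assumes "b \<le> x"
  shows "Fbar M \<xi> (x + A) * (\<Sum>n<N. prob (pre_jump_set b A n)) \<le> measure M (jump_set x b)"
proof -
  define D where "D n = pre_jump_set b A n \<inter> {\<omega>\<in>space M. \<xi> (Suc n) \<omega> > x + A}" for n
  have "pre_jump_set b A n \<in> sets M" for n
    using pre_jump_set_sets_F sets_F_subset by blast
  then have D_sets: "D n \<in> sets M" for n
    unfolding D_def by measurable
  have jumps: "S \<xi> (Suc n) \<omega> > x" and before: "\<And>k. k \<le> n \<Longrightarrow> S \<xi> k \<omega> \<le> b"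
    if "\<omega> \<in> D n" for \<omega> n
    using that by (auto simp: D_def pre_jump_set_def S_Suc)
  have D_subset: "D n \<subseteq> jump_set x b" for n
  proof
    fix \<omega>
    assume \<omega>: "\<omega> \<in> D n"
    have "\<forall>k<Suc n. S \<xi> k \<omega> \<le> x"
      using before[OF \<omega>] \<open>b \<le> x\<close> by (meson less_Suc_eq_le order_trans)
    then have "mu \<xi> x \<omega> = enat (Suc n)"
      using jumps[OF \<omega>] by (simp add: mu_eq_enat_iff)
    then show "\<omega> \<in> jump_set x b"
      using \<omega> before[OF \<omega>, of n] by (auto simp: jump_set_def D_def pre_jump_set_def sigma_gt_def Suc_ile_eq)
  qed
  have "D n \<inter> D m = {}" if "n < m" for n m
  proof (rule equals0I)
    fix \<omega>
    assume "\<omega> \<in> D n \<inter> D m"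
    then have "S \<xi> (Suc n) \<omega> > x" "S \<xi> (Suc n) \<omega> \<le> b"
      using jumps[of \<omega> n] before[of \<omega> m "Suc n"] that by auto
    with \<open>b \<le> x\<close> show False
      by simp
  qed
  then have "disjoint_family_on D {..<N}"
    unfolding disjoint_family_on_def by (metis inf_commute linorder_neqE_nat)
  then have "(\<Sum>n<N. prob (D n)) = measure M (\<Union>n<N. D n)"
    using D_sets by (intro finite_measure_finite_Union[symmetric]) auto
  also have "\<dots> \<le> measure M (jump_set x b)"
    using D_subset jump_set_sets by (intro finite_measure_mono) auto
  finally show ?thesis
    using prob_Int_jump[OF pre_jump_set_sets_F]
    by (simp add: D_def sum_distrib_left mult.commute)
qed

lemma prob_S_greater_tendsto_0: "((\<lambda>y. prob {\<omega>\<in>space M. S \<xi> k \<omega> > y}) \<longlongrightarrow> 0) at_top"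
proof -
  interpret D: real_distribution "distr M borel (S \<xi> k)"
    by (rule real_distribution_distr) simp
  have "cdf (distr M borel (S \<xi> k)) y = prob (S \<xi> k -` {..y} \<inter> space M)" for y
    unfolding cdf_def2 by (rule measure_distr) auto
  also have "prob (S \<xi> k -` {..y} \<inter> space M) = 1 - prob {\<omega>\<in>space M. S \<xi> k \<omega> > y}" for y
    by (subst prob_compl[symmetric]) (auto intro: arg_cong[where f = prob])
  finally have "prob {\<omega>\<in>space M. S \<xi> k \<omega> > y} = 1 - cdf (distr M borel (S \<xi> k)) y" for y
    by simp
  then show ?thesis
    using tendsto_diff[OF tendsto_const D.cdf_lim_at_top_prob, of 1] by simp
qed

lemma prob_S_le_neg_tendsto_0: "((\<lambda>A. prob {\<omega>\<in>space M. S \<xi> k \<omega> \<le> -A}) \<longlongrightarrow> 0) at_top"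
proof -
  interpret D: real_distribution "distr M borel (S \<xi> k)"
    by (rule real_distribution_distr) simp
  have "prob {\<omega>\<in>space M. S \<xi> k \<omega> \<le> -A} = cdf (distr M borel (S \<xi> k)) (-A)" for A
  proof -
    have "{\<omega>\<in>space M. S \<xi> k \<omega> \<le> -A} = S \<xi> k -` {..-A} \<inter> space M"
      by auto
    then show ?thesis
      unfolding cdf_def2 by (simp add: measure_distr)
  qed
  then show ?thesis
    using filterlim_compose[OF D.cdf_lim_at_bot filterlim_uminus_at_bot_at_top] by simp
qed

lemma eventually_jump_set_ratio_greater:
  assumes tail_pos: "\<And>x. Fbar M \<xi> x > 0"
    and long_tailed: "\<And>c. c > 0 \<Longrightarrow> ((\<lambda>x. Fbar M \<xi> (x - c) / Fbar M \<xi> x) \<longlongrightarrow> 1) at_top"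
    and h_le: "\<And>x. x \<ge> 0 \<Longrightarrow> h x \<le> x"
    and h_at_top: "filterlim h at_top at_top"
    and "a < Esigma"
  shows "eventually (\<lambda>x. a < measure M (jump_set x (h x)) / Fbar M \<xi> x) at_top"
proof -
  define d where "d = Esigma - a"
  have "d > 0"
    using \<open>a < Esigma\<close> by (simp add: d_def)
  have "eventually (\<lambda>N. (\<Sum>n<N. prob (sigma_gt n)) > Esigma - d/2) sequentially"
    using sums_prob_sigma_gt[unfolded sums_def] by (rule order_tendstoD(1)) (use \<open>d > 0\<close> in simp)
  then obtain N where N: "(\<Sum>n<N. prob (sigma_gt n)) > Esigma - d/2"
    by (auto simp: eventually_sequentially)
  define low where "low A = (\<Sum>n<N. prob {\<omega>\<in>space M. S \<xi> n \<omega> \<le> -A})" for A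
  have "(low \<longlongrightarrow> (\<Sum>n<N. 0)) at_top"
    unfolding low_def[abs_def] by (intro tendsto_sum prob_S_le_neg_tendsto_0)
  then have "eventually (\<lambda>A. low A < d/2 \<and> A > 0) at_top"
    using \<open>d > 0\<close> by (intro eventually_conj order_tendstoD(2) eventually_gt_at_top) auto
  then obtain A where A: "low A < d/2" "A > 0"
    by (auto simp: eventually_at_top_linorder)
  define high where "high x = (\<Sum>n<N. \<Sum>k\<le>n. prob {\<omega>\<in>space M. S \<xi> k \<omega> > h x})" for x
  have "(high \<longlongrightarrow> (\<Sum>n<N. \<Sum>k\<le>n. 0)) at_top"
    unfolding high_def[abs_def]
    by (intro tendsto_sum filterlim_compose[OF prob_S_greater_tendsto_0 h_at_top])
  then have "(high \<longlongrightarrow> 0) at_top"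
    by simp
  then have "((\<lambda>x. Fbar M \<xi> (x + A) / Fbar M \<xi> x * ((\<Sum>n<N. prob (sigma_gt n)) - low A - high x))
      \<longlongrightarrow> 1 * ((\<Sum>n<N. prob (sigma_gt n)) - low A - 0)) at_top"
    by (intro tendsto_intros long_tailed_shift_right[OF long_tailed \<open>A > 0\<close>]) simp
  moreover have "a < (\<Sum>n<N. prob (sigma_gt n)) - low A"
    using N A(1) d_def by linarith
  ultimately have "eventually (\<lambda>x. a < Fbar M \<xi> (x + A) / Fbar M \<xi> x *
      ((\<Sum>n<N. prob (sigma_gt n)) - low A - high x)) at_top"
    by (intro order_tendstoD(1)) simp_all
  then show ?thesis
    using eventually_ge_at_top[of "0::real"]
  proof eventually_elim
    case (elim x)
    have "(\<Sum>n<N. prob (sigma_gt n)) - low A - high x \<le> (\<Sum>n<N. prob (pre_jump_set (h x) A n))"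
      unfolding low_def high_def sum_subtractf[symmetric]
      by (intro sum_mono prob_pre_jump_set_ge)
    then have "Fbar M \<xi> (x + A) * ((\<Sum>n<N. prob (sigma_gt n)) - low A - high x)
        \<le> measure M (jump_set x (h x))"
      using measure_jump_set_ge[OF h_le[OF \<open>x \<ge> 0\<close>], of A N] tail_pos[of "x + A"]
      by (meson less_imp_le mult_left_mono order_trans)
    then have "Fbar M \<xi> (x + A) / Fbar M \<xi> x * ((\<Sum>n<N. prob (sigma_gt n)) - low A - high x)
        \<le> measure M (jump_set x (h x)) / Fbar M \<xi> x"
      using tail_pos[of x] by (simp add: divide_right_mono)
    with elim(1) show ?case
      by linarith
  qed
qed

lemma jump_set_ratio_tendsto:
  assumes tail_pos: "\<And>x. Fbar M \<xi> x > 0"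
    and long_tailed: "\<And>c. c > 0 \<Longrightarrow> ((\<lambda>x. Fbar M \<xi> (x - c) / Fbar M \<xi> x) \<longlongrightarrow> 1) at_top"
    and h_le: "\<And>x. x \<ge> 0 \<Longrightarrow> h x \<le> x"
    and h_at_top: "filterlim h at_top at_top"
    and h_insensitive: "((\<lambda>x. Fbar M \<xi> (x - h x) / Fbar M \<xi> x) \<longlongrightarrow> 1) at_top"
  shows "((\<lambda>x. measure M (jump_set x (h x)) / Fbar M \<xi> x) \<longlongrightarrow> Esigma) at_top"
proof (rule order_tendstoI)
  fix a
  assume "a < Esigma"
  then show "eventually (\<lambda>x. a < measure M (jump_set x (h x)) / Fbar M \<xi> x) at_top"
    by (intro eventually_jump_set_ratio_greater[OF tail_pos long_tailed h_le h_at_top])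
next
  fix a
  assume "Esigma < a"
  moreover have "((\<lambda>x. Esigma * (Fbar M \<xi> (x - h x) / Fbar M \<xi> x)) \<longlongrightarrow> Esigma * 1) at_top"
    by (intro tendsto_mult tendsto_const h_insensitive)
  ultimately have "eventually (\<lambda>x. Esigma * (Fbar M \<xi> (x - h x) / Fbar M \<xi> x) < a) at_top"
    by (intro order_tendstoD(2)) auto
  then show "eventually (\<lambda>x. measure M (jump_set x (h x)) / Fbar M \<xi> x < a) at_top"
    using eventually_ge_at_top[of "0::real"]
  proof eventually_elim
    case (elim x)
    have "measure M (jump_set x (h x)) / Fbar M \<xi> x \<le> Esigma * Fbar M \<xi> (x - h x) / Fbar M \<xi> x"
      using measure_jump_set_le[OF \<open>x \<ge> 0\<close>] tail_pos[of x] by (simp add: divide_right_mono)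
    with elim(1) show ?case
      by simp
  qed
qed

end

theorem lemma5:
  fixes M :: "'a measure" and \<xi> :: "nat \<Rightarrow> 'a \<Rightarrow> real" and m :: real
    and F :: "nat \<Rightarrow> 'a measure" and \<sigma> :: "'a \<Rightarrow> enat" and h :: "real \<Rightarrow> real"
  assumes P: "prob_space M"
    and rv: "\<And>n. n \<ge> 1 \<Longrightarrow> \<xi> n \<in> borel_measurable M"
    and indep: "prob_space.indep_vars M (\<lambda>_. borel) \<xi> {1..}"
    and ident: "\<And>n. n \<ge> 1 \<Longrightarrow> distr M borel (\<xi> n) = distr M borel (\<xi> 1)"
    and integ: "integrable M (\<xi> 1)"
    and mean: "prob_space.expectation M (\<xi> 1) = - m"
    and m_pos: "m > 0"
    and tail_pos: "\<And>x. Fbar M \<xi> x > 0"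
    and long_tailed: "\<And>c. c > 0 \<Longrightarrow> ((\<lambda>x. Fbar M \<xi> (x - c) / Fbar M \<xi> x) \<longlongrightarrow> 1) at_top"
    and filt_sub: "\<And>n. subalgebra M (F n)"
    and filt_mono: "\<And>n k. n \<le> k \<Longrightarrow> sets (F n) \<subseteq> sets (F k)"
    and adapted: "\<And>n. n \<ge> 1 \<Longrightarrow> \<xi> n \<in> borel_measurable (F n)"
    and indep_next: "\<And>n. prob_space.indep_set M (sets (F n))
                          (sets (vimage_algebra (space M) (\<xi> (Suc n)) borel))"
    and stopping: "\<And>n. Measurable.pred (F n) (\<lambda>\<omega>. \<sigma> \<omega> \<le> enat n)"
    and Esigma_fin: "(\<integral>\<^sup>+\<omega>. ennreal_of_enat (\<sigma> \<omega>) \<partial>M) < \<infinity>"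
    and h_nonneg: "\<And>x. x \<ge> 0 \<Longrightarrow> h x \<ge> 0"
    and h1: "\<And>x. x \<ge> 0 \<Longrightarrow> h x \<le> x / 2"
    and h2: "filterlim h at_top at_top"
    and h3: "((\<lambda>x. Fbar M \<xi> (x - h x) / Fbar M \<xi> x) \<longlongrightarrow> 1) at_top"
    and h4: "\<exists>x0\<ge>0. \<forall>x\<ge>x0. \<forall>t\<ge>0. h (x + t) \<le> h x + t"
  shows "((delta M \<xi> h \<sigma> \<longlongrightarrow> 0) at_top) \<longleftrightarrow>
         ((\<lambda>x. measure M {\<omega>\<in>space M. Msig \<xi> \<sigma> \<omega> > ereal x} / Fbar M \<xi> x)
            \<longlongrightarrow> enn2real (\<integral>\<^sup>+\<omega>. ennreal_of_enat (\<sigma> \<omega>) \<partial>M)) at_top"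
proof -
  interpret stopped_walk M \<xi> F \<sigma>
    by (intro stopped_walk.intro stopped_walk_axioms.intro P) fact+
  define jump where "jump x = measure M (jump_set x (h x)) / Fbar M \<xi> x" for x
  define rest where "rest x = measure M (A2 M \<xi> h \<sigma> x) / Fbar M \<xi> x" for x
  have h_le: "x \<ge> 0 \<Longrightarrow> h x \<le> x" for x
    using h1[of x] by simp
  have jump: "(jump \<longlongrightarrow> Esigma) at_top"
    using jump_set_ratio_tendsto[OF tail_pos long_tailed h_le h2 h3] unfolding jump_def[abs_def] .
  have "((\<lambda>x. jump x + rest x) \<longlongrightarrow> Esigma) at_top \<longleftrightarrow> (rest \<longlongrightarrow> 0) at_top"
    using tendsto_add[OF jump, of rest 0] tendsto_diff[OF _ jump, of "\<lambda>x. jump x + rest x" Esigma]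
    by auto
  moreover have "(delta M \<xi> h \<sigma> \<longlongrightarrow> 0) at_top \<longleftrightarrow> (rest \<longlongrightarrow> 0) at_top"
    unfolding delta_def rest_def[abs_def]
    by (rule tendsto_SUP_tail_iff) (use tail_pos in \<open>simp add: less_imp_le\<close>)
  ultimately show ?thesis
    unfolding measure_Msig_greater[where h = h] jump_def rest_def add_divide_distrib Esigma_def by simp
qed

end
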